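(* Let $p(g)=y^{a(g)}x^{b(g)}$ be a continuous $1$-cocycle of $G_k$ with values in $\pi/[\pi]_2$. The lifts of $p$ to $1$-cocycles in $C^1(G_k,\pi/[\pi]_3)$ are in bijection with the set of cochains $c\in C^1(G_k,\hat{\mathbb Z}(2))$ such that $Dc=-b\cup a$, via $c\mapsto(b,a)_c$, where $(b,a)_c(g)=y^{a(g)}x^{b(g)}[x,y]^{c(g)}$.
   Context: Let $k$ be either a subfield of $\mathbb C$ or the completion of a number field $F\subset\mathbb C$ at a place, with fixed embeddings $\mathbb C\supset\overline{\mathbb Q}\subseteq\overline k$; $\chi$ the cyclotomic character. $\pi=\pi_1^{et}(\mathbb P^1_{\overline k}-\{0,1,\infty\},\overrightarrow{01})\cong\langle x,y\rangle^\wedge$ (profinite free group; $x$ loop around $0$, $y$ loop around $1$) with $G_k$-action $\sigma(x)=x^{\chi(\sigma)}$, $\sigma(y)=\mathfrak f(\sigma)^{-1}y^{\chi(\sigma)}\mathfrak f(\sigma)$, $\mathfrak f:G_k\to[\pi]_2$ a cocycle. $[\pi]_n$ is the lower central series, $[u,v]=uvu^{-1}v^{-1}$, $\hat{\mathbb Z}(n)$ is $\hat{\mathbb Z}$ with action via $\chi^n$; $b,a:G_k\to\hat{\mathbb Z}(1)$. A $1$-cocycle with values in a nonabelian group $Q$ means $s(gh)=s(g)\,g(s(h))$; $C^1$ denotes continuous cochains, $D$ the differential, and $(b\cup a)(g,h)=b(g)\chi(g)a(h)$. *)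

theory Defs
  imports "HOL-Algebra.Group" "HOL-Analysis.Analysis"
begin

text \<open>An element of \<open>\<hat>\<int> = lim Z/n\<close> is represented by the function
  \<open>z :: nat \<Rightarrow> int\<close> with \<open>z n \<in> {0..<n}\<close> the residue mod n (n > 0),
  compatible under divisibility; \<open>z 0 = 0\<close> normalises the unused slot.\<close>

definition zhat :: "(nat \<Rightarrow> int) set" where
  "zhat = {z. z 0 = 0 \<and> (\<forall>n>0. 0 \<le> z n \<and> z n < int n)
              \<and> (\<forall>m n. 0 < m \<and> m dvd n \<longrightarrow> z m = z n mod int m)}"

definition zconst :: "int \<Rightarrow> nat \<Rightarrow> int" where
  "zconst k = (\<lambda>n. if n = 0 then 0 else k mod int n)"

definition zzero :: "nat \<Rightarrow> int" where "zzero = zconst 0"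
definition zone :: "nat \<Rightarrow> int" where "zone = zconst 1"

definition zadd :: "(nat \<Rightarrow> int) \<Rightarrow> (nat \<Rightarrow> int) \<Rightarrow> nat \<Rightarrow> int" where
  "zadd z w = (\<lambda>n. if n = 0 then 0 else (z n + w n) mod int n)"

definition zmul :: "(nat \<Rightarrow> int) \<Rightarrow> (nat \<Rightarrow> int) \<Rightarrow> nat \<Rightarrow> int" where
  "zmul z w = (\<lambda>n. if n = 0 then 0 else (z n * w n) mod int n)"

definition zneg :: "(nat \<Rightarrow> int) \<Rightarrow> nat \<Rightarrow> int" where
  "zneg z = (\<lambda>n. if n = 0 then 0 else (- z n) mod int n)"

text \<open>Continuity of a map into \<open>\<hat>\<int>\<close> (inverse limit topology of the discrete
  \<open>Z/n\<close>): it lands in \<open>\<hat>\<int>\<close> and the preimage of every subbasic open set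
  \<open>{z. z n = r}\<close> is open.\<close>

definition zhat_cont :: "'g topology \<Rightarrow> ('g \<Rightarrow> nat \<Rightarrow> int) \<Rightarrow> bool" where
  "zhat_cont T f \<longleftrightarrow> f \<in> topspace T \<rightarrow> zhat \<and>
     (\<forall>n>0. \<forall>r. openin T {g \<in> topspace T. f g n = r})"

definition topological_group :: "('g,'m) monoid_scheme \<Rightarrow> 'g topology \<Rightarrow> bool" where
  "topological_group G T \<longleftrightarrow> group G \<and> topspace T = carrier G \<and>
     continuous_map (prod_topology T T) T (\<lambda>(g,h). g \<otimes>\<^bsub>G\<^esub> h) \<and>
     continuous_map T T (\<lambda>g. inv\<^bsub>G\<^esub> g)"

definition zhat_character :: "('g,'m) monoid_scheme \<Rightarrow> 'g topology \<Rightarrow> ('g \<Rightarrow> nat \<Rightarrow> int) \<Rightarrow> bool" where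
  "zhat_character G T chi \<longleftrightarrow> zhat_cont T chi \<and>
     (\<forall>g\<in>carrier G. \<exists>u\<in>zhat. zmul (chi g) u = zone) \<and>
     (\<forall>g\<in>carrier G. \<forall>h\<in>carrier G. chi (g \<otimes>\<^bsub>G\<^esub> h) = zmul (chi g) (chi h))"

text \<open>\<open>\<pi>/[\<pi>]_2\<close>: the pair \<open>(a,b)\<close> stands for \<open>y^a x^b\<close> (abelian).\<close>
definition Q2 :: "((nat \<Rightarrow> int) \<times> (nat \<Rightarrow> int)) monoid" where
  "Q2 = \<lparr>carrier = zhat \<times> zhat,
         monoid.mult = (\<lambda>(a,b) (a',b'). (zadd a a', zadd b b')),
         monoid.one = (zzero, zzero)\<rparr>"

text \<open>\<open>\<pi>/[\<pi>]_3\<close>: the triple \<open>(a,b,c)\<close> stands for \<open>y^a x^b [x,y]^c\<close>; since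
  \<open>x^b y^a' = y^a' x^b [x,y]^(b a')\<close> modulo \<open>[\<pi>]_3\<close>, the product is as below.\<close>
definition Q3 :: "((nat \<Rightarrow> int) \<times> (nat \<Rightarrow> int) \<times> (nat \<Rightarrow> int)) monoid" where
  "Q3 = \<lparr>carrier = zhat \<times> zhat \<times> zhat,
         monoid.mult = (\<lambda>(a,b,c) (a',b',c'). (zadd a a', zadd b b', zadd (zadd c c') (zmul b a'))),
         monoid.one = (zzero, zzero, zzero)\<rparr>"

definition yxc :: "(nat \<Rightarrow> int) \<Rightarrow> (nat \<Rightarrow> int) \<Rightarrow> (nat \<Rightarrow> int) \<Rightarrow> (nat \<Rightarrow> int) \<times> (nat \<Rightarrow> int) \<times> (nat \<Rightarrow> int)" where
  "yxc a b c = (a, b, c)"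

definition proj32 :: "(nat \<Rightarrow> int) \<times> (nat \<Rightarrow> int) \<times> (nat \<Rightarrow> int) \<Rightarrow> (nat \<Rightarrow> int) \<times> (nat \<Rightarrow> int)" where
  "proj32 = (\<lambda>(a,b,c). (a,b))"

text \<open>Induced Galois actions: \<open>\<sigma>(x) = x^\<chi>\<close>, \<open>\<sigma>(y) = f^-1 y^\<chi> f\<close> with
  \<open>f \<in> [\<pi>]_2\<close> central modulo \<open>[\<pi>]_3\<close>, hence \<open>[x,y] \<mapsto> [x,y]^(\<chi>^2)\<close>.\<close>
definition act2 :: "('g \<Rightarrow> nat \<Rightarrow> int) \<Rightarrow> 'g \<Rightarrow> (nat \<Rightarrow> int) \<times> (nat \<Rightarrow> int) \<Rightarrow> (nat \<Rightarrow> int) \<times> (nat \<Rightarrow> int)" where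
  "act2 chi g = (\<lambda>(a,b). (zmul (chi g) a, zmul (chi g) b))"

definition act3 :: "('g \<Rightarrow> nat \<Rightarrow> int) \<Rightarrow> 'g \<Rightarrow> (nat \<Rightarrow> int) \<times> (nat \<Rightarrow> int) \<times> (nat \<Rightarrow> int)
     \<Rightarrow> (nat \<Rightarrow> int) \<times> (nat \<Rightarrow> int) \<times> (nat \<Rightarrow> int)" where
  "act3 chi g = (\<lambda>(a,b,c). (zmul (chi g) a, zmul (chi g) b, zmul (zmul (chi g) (chi g)) c))"

definition cocycle1 :: "('g,'m) monoid_scheme \<Rightarrow> ('q,'n) monoid_scheme \<Rightarrow> ('g \<Rightarrow> 'q \<Rightarrow> 'q) \<Rightarrow> ('g \<Rightarrow> 'q) \<Rightarrow> bool" where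
  "cocycle1 G Q act s \<longleftrightarrow> s \<in> carrier G \<rightarrow> carrier Q \<and>
     (\<forall>g\<in>carrier G. \<forall>h\<in>carrier G. s (g \<otimes>\<^bsub>G\<^esub> h) = s g \<otimes>\<^bsub>Q\<^esub> act g (s h))"

definition cont2 :: "'g topology \<Rightarrow> ('g \<Rightarrow> (nat \<Rightarrow> int) \<times> (nat \<Rightarrow> int)) \<Rightarrow> bool" where
  "cont2 T s \<longleftrightarrow> zhat_cont T (\<lambda>g. fst (s g)) \<and> zhat_cont T (\<lambda>g. snd (s g))"

definition cont3 :: "'g topology \<Rightarrow> ('g \<Rightarrow> (nat \<Rightarrow> int) \<times> (nat \<Rightarrow> int) \<times> (nat \<Rightarrow> int)) \<Rightarrow> bool" where
  "cont3 T s \<longleftrightarrow> zhat_cont T (\<lambda>g. fst (s g)) \<and> zhat_cont T (\<lambda>g. fst (snd (s g)))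
                 \<and> zhat_cont T (\<lambda>g. snd (snd (s g)))"

definition C1 :: "('g,'m) monoid_scheme \<Rightarrow> 'g topology \<Rightarrow> ('g \<Rightarrow> nat \<Rightarrow> int) set" where
  "C1 G T = {c \<in> carrier G \<rightarrow>\<^sub>E zhat. zhat_cont T c}"

definition D2 :: "('g,'m) monoid_scheme \<Rightarrow> ('g \<Rightarrow> nat \<Rightarrow> int) \<Rightarrow> ('g \<Rightarrow> nat \<Rightarrow> int) \<Rightarrow> 'g \<Rightarrow> 'g \<Rightarrow> nat \<Rightarrow> int" where
  "D2 G chi c g h = zadd (zadd (zmul (zmul (chi g) (chi g)) (c h)) (zneg (c (g \<otimes>\<^bsub>G\<^esub> h)))) (c g)"

definition cup :: "('g \<Rightarrow> nat \<Rightarrow> int) \<Rightarrow> ('g \<Rightarrow> nat \<Rightarrow> int) \<Rightarrow> ('g \<Rightarrow> nat \<Rightarrow> int) \<Rightarrow> 'g \<Rightarrow> 'g \<Rightarrow> nat \<Rightarrow> int" where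
  "cup chi b a g h = zmul (b g) (zmul (chi g) (a h))"

end

theory Submission
  imports Defs
begin

text \<open>In the normal form \<open>y^a x^b [x,y]^c\<close> of \<open>\<pi>/[\<pi>]_3\<close>, a lift of \<open>p = y^a x^b\<close> is
  the same thing as a cochain \<open>c\<close>, and the only nonlinear term of the product in
  \<open>\<pi>/[\<pi>]_3\<close> is \<open>x^b y^a' = y^a' x^b [x,y]^(b a')\<close>. Comparing the \<open>[x,y]\<close>-exponents of
  \<open>s(gh)\<close> and \<open>s(g) g(s(h))\<close> therefore turns the cocycle condition for the lift into
  \<open>c(gh) = c(g) + \<chi>(g)^2 c(h) + b(g) \<chi>(g) a(h)\<close>, which is \<open>Dc = -b \<union> a\<close>; continuity
  of the lift is continuity of \<open>c\<close> since \<open>a\<close> and \<open>b\<close> are already continuous.\<close>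

lemma zhat_eq_zadd_iff:
  assumes "X \<in> zhat"
  shows "X = zadd (zadd C U) V \<longleftrightarrow> zadd (zadd U (zneg X)) C = zneg V"
proof -
  have "X n = zadd (zadd C U) V n \<longleftrightarrow> zadd (zadd U (zneg X)) C n = zneg V n" for n
  proof (cases "n = 0")
    case True
    then show ?thesis using assms by (simp add: zhat_def zadd_def zneg_def)
  next
    case False
    \<comment> \<open>\<open>X \<in> zhat\<close> means \<open>X n\<close> is already reduced, so the left equation is a congruence\<close>
    then have "X n = X n mod int n" using assms by (simp add: zhat_def)
    then have "X n = (C n + U n + V n) mod int n \<longleftrightarrow> int n dvd X n - (C n + U n + V n)"
      by (metis mod_eq_dvd_iff)
    also have "\<dots> \<longleftrightarrow> int n dvd (U n - X n + C n) - (- V n)"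
    proof -
      have "X n - (C n + U n + V n) = - ((U n - X n + C n) - (- V n))" by simp
      then show ?thesis by (simp only: dvd_minus_iff)
    qed
    also have "\<dots> \<longleftrightarrow> (U n - X n + C n) mod int n = (- V n) mod int n"
      by (simp add: mod_eq_dvd_iff)
    finally show ?thesis using False by (simp add: zadd_def zneg_def mod_simps)
  qed
  then show ?thesis by (auto simp: fun_eq_iff)
qed

lemma zhat_cont_cong:
  assumes "\<And>g. g \<in> topspace T \<Longrightarrow> f g = f' g"
  shows "zhat_cont T f \<longleftrightarrow> zhat_cont T f'"
proof -
  have "{g \<in> topspace T. f g n = r} = {g \<in> topspace T. f' g n = r}" for n r
    using assms by auto
  then show ?thesis using assms by (auto simp: zhat_cont_def Pi_def)
qed

lemma cocycle1_Q2_components: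
  assumes "group G" and "cocycle1 G Q2 (act2 chi) (\<lambda>g\<in>carrier G. (a g, b g))"
    and "g \<in> carrier G" and "h \<in> carrier G"
  shows "a (g \<otimes>\<^bsub>G\<^esub> h) = zadd (a g) (zmul (chi g) (a h))"
    and "b (g \<otimes>\<^bsub>G\<^esub> h) = zadd (b g) (zmul (chi g) (b h))"
proof -
  have "(\<lambda>g\<in>carrier G. (a g, b g)) (g \<otimes>\<^bsub>G\<^esub> h) =
        (a g, b g) \<otimes>\<^bsub>Q2\<^esub> act2 chi g (a h, b h)"
    using assms(2-4) unfolding cocycle1_def by auto
  moreover have "g \<otimes>\<^bsub>G\<^esub> h \<in> carrier G" using assms by (simp add: group.is_monoid monoid.m_closed)
  ultimately show "a (g \<otimes>\<^bsub>G\<^esub> h) = zadd (a g) (zmul (chi g) (a h))"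
    and "b (g \<otimes>\<^bsub>G\<^esub> h) = zadd (b g) (zmul (chi g) (b h))"
    by (simp_all add: Q2_def act2_def)
qed

lemma cocycle1_Q2_in_zhat:
  assumes "cocycle1 G Q2 act (\<lambda>g\<in>carrier G. (a g, b g))" and "g \<in> carrier G"
  shows "a g \<in> zhat" and "b g \<in> zhat"
  using assms by (force simp: cocycle1_def Q2_def)+

lemma cocycle1_Q3_lift_iff_D2:
  assumes "group G" and p: "cocycle1 G Q2 (act2 chi) (\<lambda>g\<in>carrier G. (a g, b g))"
    and c: "c \<in> carrier G \<rightarrow> zhat"
  shows "cocycle1 G Q3 (act3 chi) (\<lambda>g\<in>carrier G. yxc (a g) (b g) (c g)) \<longleftrightarrow>
         (\<forall>g\<in>carrier G. \<forall>h\<in>carrier G. D2 G chi c g h = zneg (cup chi b a g h))"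
proof -
  have closed: "g \<otimes>\<^bsub>G\<^esub> h \<in> carrier G" if "g \<in> carrier G" "h \<in> carrier G" for g h
    using assms that by (simp add: group.is_monoid monoid.m_closed)
  have "cocycle1 G Q3 (act3 chi) (\<lambda>g\<in>carrier G. yxc (a g) (b g) (c g)) \<longleftrightarrow>
        (\<forall>g\<in>carrier G. \<forall>h\<in>carrier G. c (g \<otimes>\<^bsub>G\<^esub> h) =
           zadd (zadd (c g) (zmul (zmul (chi g) (chi g)) (c h))) (zmul (b g) (zmul (chi g) (a h))))"
    using c closed cocycle1_Q2_in_zhat[OF p] cocycle1_Q2_components[OF assms(1) p]
    by (auto simp: cocycle1_def Q3_def act3_def yxc_def Pi_def)
  also have "\<dots> \<longleftrightarrow> (\<forall>g\<in>carrier G. \<forall>h\<in>carrier G. D2 G chi c g h = zneg (cup chi b a g h))"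
    unfolding D2_def cup_def using zhat_eq_zadd_iff c closed by (meson PiE)
  finally show ?thesis .
qed

lemma cont2_restrict_iff:
  assumes "topspace T = A"
  shows "cont2 T (\<lambda>g\<in>A. (a g, b g)) \<longleftrightarrow> zhat_cont T a \<and> zhat_cont T b"
  using assms zhat_cont_cong[of T "\<lambda>g. fst ((\<lambda>g\<in>A. (a g, b g)) g)" a]
    zhat_cont_cong[of T "\<lambda>g. snd ((\<lambda>g\<in>A. (a g, b g)) g)" b]
  by (simp add: cont2_def)

lemma cont3_lift_iff:
  assumes "zhat_cont T a" and "zhat_cont T b" and "topspace T = A"
  shows "cont3 T (\<lambda>g\<in>A. yxc (a g) (b g) (c g)) \<longleftrightarrow> zhat_cont T c"
  using assms zhat_cont_cong[of T "\<lambda>g. fst ((\<lambda>g\<in>A. yxc (a g) (b g) (c g)) g)" a]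
    zhat_cont_cong[of T "\<lambda>g. fst (snd ((\<lambda>g\<in>A. yxc (a g) (b g) (c g)) g))" b]
    zhat_cont_cong[of T "\<lambda>g. snd (snd ((\<lambda>g\<in>A. yxc (a g) (b g) (c g)) g))" c]
  by (simp add: cont3_def yxc_def)

lemma lift_of_proj32:
  assumes "s \<in> A \<rightarrow>\<^sub>E carrier Q3" and "\<forall>g\<in>A. proj32 (s g) = (a g, b g)"
  shows "s = (\<lambda>g\<in>A. yxc (a g) (b g) (snd (snd (s g))))"
proof
  fix g show "s g = (\<lambda>g\<in>A. yxc (a g) (b g) (snd (snd (s g)))) g"
  proof (cases "g \<in> A")
    case True
    obtain x y z where "s g = (x, y, z)" by (cases "s g") auto
    with True assms(2) show ?thesis by (auto simp: yxc_def proj32_def)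
  qed (use assms(1) in auto)
qed

lemma lift_in_PiE_Q3:
  assumes "a \<in> A \<rightarrow> zhat" and "b \<in> A \<rightarrow> zhat" and "c \<in> A \<rightarrow> zhat"
  shows "(\<lambda>g\<in>A. yxc (a g) (b g) (c g)) \<in> A \<rightarrow>\<^sub>E carrier Q3"
  using assms by (auto simp: Q3_def yxc_def)

lemma inj_on_lift:
  "inj_on (\<lambda>c. \<lambda>g\<in>A. yxc (a g) (b g) (c g)) (A \<rightarrow>\<^sub>E X)"
proof
  fix c c' assume c: "c \<in> A \<rightarrow>\<^sub>E X" and c': "c' \<in> A \<rightarrow>\<^sub>E X"
    and eq: "(\<lambda>g\<in>A. yxc (a g) (b g) (c g)) = (\<lambda>g\<in>A. yxc (a g) (b g) (c' g))"
  have "c g = c' g" if "g \<in> A" for g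
    using fun_cong[OF eq, of g] that by (simp add: yxc_def)
  with c c' show "c = c'" by (rule PiE_ext)
qed

theorem corollary12p1:
  fixes G :: "('g,'m) monoid_scheme" and T :: "'g topology"
    and chi a b :: "'g \<Rightarrow> nat \<Rightarrow> int"
  assumes "topological_group G T"
    and "zhat_character G T chi"
    and "cocycle1 G Q2 (act2 chi) (\<lambda>g\<in>carrier G. (a g, b g))"
    and "cont2 T (\<lambda>g\<in>carrier G. (a g, b g))"
  shows "bij_betw (\<lambda>c. \<lambda>g\<in>carrier G. yxc (a g) (b g) (c g))
           {c \<in> C1 G T. \<forall>g\<in>carrier G. \<forall>h\<in>carrier G. D2 G chi c g h = zneg (cup chi b a g h)}
           {s \<in> carrier G \<rightarrow>\<^sub>E carrier Q3. cont3 T s \<and> cocycle1 G Q3 (act3 chi) s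
              \<and> (\<forall>g\<in>carrier G. proj32 (s g) = (a g, b g))}"
proof -
  have grp: "group G" and top: "topspace T = carrier G"
    using assms(1) by (auto simp: topological_group_def)
  have "zhat_cont T a" and "zhat_cont T b"
    using assms(4) cont2_restrict_iff[OF top] by auto
  note cont = cont3_lift_iff[OF this top]
  note coc = cocycle1_Q3_lift_iff_D2[OF grp assms(3)]
  note ab = cocycle1_Q2_in_zhat[OF assms(3)]
  let ?lift = "\<lambda>c. \<lambda>g\<in>carrier G. yxc (a g) (b g) (c g)"
  let ?Z = "{c \<in> C1 G T. \<forall>g\<in>carrier G. \<forall>h\<in>carrier G. D2 G chi c g h = zneg (cup chi b a g h)}"
  let ?S = "{s \<in> carrier G \<rightarrow>\<^sub>E carrier Q3. cont3 T s \<and> cocycle1 G Q3 (act3 chi) s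
              \<and> (\<forall>g\<in>carrier G. proj32 (s g) = (a g, b g))}"
  have lift_mem_iff: "?lift c \<in> ?S \<longleftrightarrow> c \<in> ?Z" if c: "c \<in> carrier G \<rightarrow>\<^sub>E zhat" for c
  proof -
    have "?lift c \<in> carrier G \<rightarrow>\<^sub>E carrier Q3" using c ab by (intro lift_in_PiE_Q3) auto
    then show ?thesis using c cont coc[of c] by (auto simp: C1_def proj32_def yxc_def)
  qed
  show ?thesis
  proof (rule bij_betwI')
    fix c c' assume "c \<in> ?Z" and "c' \<in> ?Z"
    then show "(?lift c = ?lift c') = (c = c')"
      using inj_on_lift[where A = "carrier G" and X = zhat] by (auto simp: C1_def inj_on_def)
  next
    fix c assume "c \<in> ?Z"
    then show "?lift c \<in> ?S" using lift_mem_iff by (simp add: C1_def)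
  next
    fix s assume s: "s \<in> ?S"
    define c where "c = (\<lambda>g\<in>carrier G. snd (snd (s g)))"
    have "s = ?lift c"
      using lift_of_proj32[of s "carrier G" a b] s by (simp add: c_def cong: restrict_cong)
    moreover have "c \<in> carrier G \<rightarrow>\<^sub>E zhat" using s by (force simp: c_def Q3_def)
    ultimately show "\<exists>c\<in>?Z. s = ?lift c" using s lift_mem_iff by auto
  qed
qed

end
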